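(* Let $\Lambda$ be a row-finite $k$-graph with no sources and $R$ a commutative ring with $1$. The cycline subalgebra $\mathcal{M}$ of ${\rm KP}_R(\Lambda)$ is commutative.
   Context: A $k$-graph is a countable category $\Lambda$ (vertices $\Lambda^0$, paths, maps $r,s$) with a degree functor $d:\Lambda\to\mathbb{N}^k$ satisfying unique factorization: if $d(\lambda)=m+n$ there are unique $\mu,\nu$ with $s(\mu)=r(\nu)$, $d(\mu)=m,d(\nu)=n$, $\lambda=\mu\nu$. $v\Lambda=\{\lambda: r(\lambda)=v\}$, $v\Lambda^n$ those of degree $n$; row-finite with no sources means each $v\Lambda^n$ is finite and nonempty. ${\rm KP}_R(\Lambda)$ is the universal $R$-algebra generated by $p_v$ ($v\in\Lambda^0$), $s_\lambda,s_{\lambda^*}$ ($d(\lambda)\ne0$) with relations (KP1) $p_v$ mutually orthogonal idempotents; (KP2) $s_\lambda s_\mu=s_{\lambda\mu}$, $s_{\mu^*}s_{\lambda^*}=s_{(\lambda\mu)^*}$, $p_{r(\lambda)}s_\lambda=s_\lambda=s_\lambda p_{s(\lambda)}$, $p_{s(\lambda)}s_{\lambda^*}=s_{\lambda^*}=s_{\lambda^*}p_{r(\lambda)}$ when $r(\mu)=s(\lambda)$; (KP3) $s_{\lambda^*}s_\mu=\delta_{\lambda,\mu}p_{s(\lambda)}$ when $d(\lambda)=d(\mu)$; (KP4) $p_v=\sum_{\lambda\in v\Lambda^n}s_\lambda s_{\lambda^*}$ for $n\ne0$. Convention $s_v=s_{v^*}=p_v$. A pair $(\alpha,\beta)\in\Lambda\times\Lambda$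 with $s(\alpha)=s(\beta)$ is a cycline pair if $s_{\alpha\gamma}s_{(\alpha\gamma)^*}=s_{\beta\gamma}s_{(\beta\gamma)^*}$ for all $\gamma\in s(\alpha)\Lambda$. The cycline subalgebra $\mathcal{M}$ is the $R$-subalgebra of ${\rm KP}_R(\Lambda)$ generated by $\{s_\alpha s_{\beta^*}: (\alpha,\beta)\text{ cycline}\}$. *)

theory Defs
  imports Main "HOL-Library.Countable_Set"
begin

text \<open>A k-graph is modelled by: a set Lam of morphisms (paths) of type 'p, the set V of
objects (vertices) identified with the identity morphisms, range and source maps r, s,
composition cmp (only meaningful on composable pairs: cmp lam mu for s lam = r mu,
i.e. lam mu in the paper's notation), and a degree functor d into N^k, where N^k is
rendered as 'k => nat for a finite index type 'k with CARD('k) = k.\<close>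

definition deg_add :: "('k \<Rightarrow> nat) \<Rightarrow> ('k \<Rightarrow> nat) \<Rightarrow> ('k \<Rightarrow> nat)" where
  "deg_add m n = (\<lambda>i. m i + n i)"

definition deg_zero :: "'k \<Rightarrow> nat" where
  "deg_zero = (\<lambda>i. 0)"

definition is_kgraph ::
  "'p set \<Rightarrow> 'p set \<Rightarrow> ('p \<Rightarrow> 'p) \<Rightarrow> ('p \<Rightarrow> 'p) \<Rightarrow> ('p \<Rightarrow> 'p \<Rightarrow> 'p)
   \<Rightarrow> ('p \<Rightarrow> ('k::finite \<Rightarrow> nat)) \<Rightarrow> bool" where
  "is_kgraph Lam V r s cmp d \<longleftrightarrow>
     countable Lam \<and> V \<subseteq> Lam \<and>
     (\<forall>l\<in>Lam. r l \<in> V \<and> s l \<in> V) \<and>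
     (\<forall>v\<in>V. r v = v \<and> s v = v) \<and>
     (\<forall>l\<in>Lam. cmp (r l) l = l \<and> cmp l (s l) = l) \<and>
     (\<forall>l\<in>Lam. \<forall>m\<in>Lam. s l = r m \<longrightarrow>
        cmp l m \<in> Lam \<and> r (cmp l m) = r l \<and> s (cmp l m) = s m) \<and>
     (\<forall>l\<in>Lam. \<forall>m\<in>Lam. \<forall>n\<in>Lam. s l = r m \<longrightarrow> s m = r n \<longrightarrow>
        cmp (cmp l m) n = cmp l (cmp m n)) \<and>
     (\<forall>v\<in>V. d v = deg_zero) \<and>
     (\<forall>l\<in>Lam. \<forall>m\<in>Lam. s l = r m \<longrightarrow> d (cmp l m) = deg_add (d l) (d m)) \<and>
     (\<forall>l\<in>Lam. \<forall>m n. d l = deg_add m n \<longrightarrow>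
        (\<exists>!(mu, nu). mu \<in> Lam \<and> nu \<in> Lam \<and> s mu = r nu \<and> d mu = m \<and> d nu = n
                     \<and> l = cmp mu nu))"

definition row_finite_no_sources ::
  "'p set \<Rightarrow> 'p set \<Rightarrow> ('p \<Rightarrow> 'p) \<Rightarrow> ('p \<Rightarrow> ('k \<Rightarrow> nat)) \<Rightarrow> bool" where
  "row_finite_no_sources Lam V r d \<longleftrightarrow>
     (\<forall>v\<in>V. \<forall>n. finite {l\<in>Lam. r l = v \<and> d l = n} \<and> {l\<in>Lam. r l = v \<and> d l = n} \<noteq> {})"

datatype 'p kpgen = Pgen 'p | Sgen 'p | Sstar 'p

text \<open>Elements of the free algebra over R on the generators: finitely supported functions
from words (lists of generators) to R; we work with all functions, the relevant ones are
finitely supported.\<close>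

type_synonym ('p, 'r) fa = "'p kpgen list \<Rightarrow> 'r"

definition fa_mono :: "'p kpgen list \<Rightarrow> ('p, 'r::comm_ring_1) fa" where
  "fa_mono w = (\<lambda>u. if u = w then 1 else 0)"

definition fa_add :: "('p, 'r::comm_ring_1) fa \<Rightarrow> ('p, 'r) fa \<Rightarrow> ('p, 'r) fa" where
  "fa_add f g = (\<lambda>u. f u + g u)"

definition fa_sub :: "('p, 'r::comm_ring_1) fa \<Rightarrow> ('p, 'r) fa \<Rightarrow> ('p, 'r) fa" where
  "fa_sub f g = (\<lambda>u. f u - g u)"

definition fa_smult :: "'r::comm_ring_1 \<Rightarrow> ('p, 'r) fa \<Rightarrow> ('p, 'r) fa" where
  "fa_smult c f = (\<lambda>u. c * f u)"

definition fa_zero :: "('p, 'r::comm_ring_1) fa" where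
  "fa_zero = (\<lambda>u. 0)"

definition fa_mult :: "('p, 'r::comm_ring_1) fa \<Rightarrow> ('p, 'r) fa \<Rightarrow> ('p, 'r) fa" where
  "fa_mult f g = (\<lambda>w. \<Sum>i\<le>length w. f (take i w) * g (drop i w))"

definition fa_sum :: "'a set \<Rightarrow> ('a \<Rightarrow> ('p, 'r::comm_ring_1) fa) \<Rightarrow> ('p, 'r) fa" where
  "fa_sum A F = (\<lambda>u. \<Sum>a\<in>A. F a u)"

text \<open>Generator words, with the convention s_v = s_{v*} = p_v for degree-zero paths
(which, by unique factorisation, are exactly the vertices).\<close>

definition kp_s :: "('p \<Rightarrow> ('k \<Rightarrow> nat)) \<Rightarrow> 'p \<Rightarrow> ('p, 'r::comm_ring_1) fa" where
  "kp_s d l = fa_mono (if d l = deg_zero then [Pgen l] else [Sgen l])"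

definition kp_sstar :: "('p \<Rightarrow> ('k \<Rightarrow> nat)) \<Rightarrow> 'p \<Rightarrow> ('p, 'r::comm_ring_1) fa" where
  "kp_sstar d l = fa_mono (if d l = deg_zero then [Pgen l] else [Sstar l])"

definition kp_p :: "'p \<Rightarrow> ('p, 'r::comm_ring_1) fa" where
  "kp_p v = fa_mono [Pgen v]"

text \<open>The defining relations (KP1)-(KP4), as elements (left side minus right side)
of the free algebra.\<close>

definition kp_relations ::
  "'p set \<Rightarrow> 'p set \<Rightarrow> ('p \<Rightarrow> 'p) \<Rightarrow> ('p \<Rightarrow> 'p) \<Rightarrow> ('p \<Rightarrow> 'p \<Rightarrow> 'p)
   \<Rightarrow> ('p \<Rightarrow> ('k \<Rightarrow> nat)) \<Rightarrow> ('p, 'r::comm_ring_1) fa set" where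
  "kp_relations Lam V r s cmp d =
     \<comment> \<open>(KP1)\<close>
     {fa_sub (fa_mult (kp_p v) (kp_p v)) (kp_p v) | v. v \<in> V} \<union>
     {fa_mult (kp_p v) (kp_p w) | v w. v \<in> V \<and> w \<in> V \<and> v \<noteq> w} \<union>
     \<comment> \<open>(KP2)\<close>
     {fa_sub (fa_mult (kp_s d l) (kp_s d m)) (kp_s d (cmp l m)) | l m.
        l \<in> Lam \<and> m \<in> Lam \<and> d l \<noteq> deg_zero \<and> d m \<noteq> deg_zero \<and> r m = s l} \<union>
     {fa_sub (fa_mult (kp_sstar d m) (kp_sstar d l)) (kp_sstar d (cmp l m)) | l m.
        l \<in> Lam \<and> m \<in> Lam \<and> d l \<noteq> deg_zero \<and> d m \<noteq> deg_zero \<and> r m = s l} \<union>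
     {fa_sub (fa_mult (kp_p (r l)) (kp_s d l)) (kp_s d l) | l. l \<in> Lam \<and> d l \<noteq> deg_zero} \<union>
     {fa_sub (fa_mult (kp_s d l) (kp_p (s l))) (kp_s d l) | l. l \<in> Lam \<and> d l \<noteq> deg_zero} \<union>
     {fa_sub (fa_mult (kp_p (s l)) (kp_sstar d l)) (kp_sstar d l) | l. l \<in> Lam \<and> d l \<noteq> deg_zero} \<union>
     {fa_sub (fa_mult (kp_sstar d l) (kp_p (r l))) (kp_sstar d l) | l. l \<in> Lam \<and> d l \<noteq> deg_zero} \<union>
     \<comment> \<open>(KP3)\<close>
     {fa_sub (fa_mult (kp_sstar d l) (kp_s d m)) (if l = m then kp_p (s l) else fa_zero) | l m.
        l \<in> Lam \<and> m \<in> Lam \<and> d l \<noteq> deg_zero \<and> d l = d m} \<union>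
     \<comment> \<open>(KP4)\<close>
     {fa_sub (kp_p v) (fa_sum {l\<in>Lam. r l = v \<and> d l = n} (\<lambda>l. fa_mult (kp_s d l) (kp_sstar d l)))
        | v n. v \<in> V \<and> n \<noteq> deg_zero}"

inductive_set fa_ideal :: "('p, 'r::comm_ring_1) fa set \<Rightarrow> ('p, 'r) fa set"
  for G :: "('p, 'r) fa set" where
  gen: "x \<in> G \<Longrightarrow> x \<in> fa_ideal G"
| zero: "fa_zero \<in> fa_ideal G"
| add: "x \<in> fa_ideal G \<Longrightarrow> y \<in> fa_ideal G \<Longrightarrow> fa_add x y \<in> fa_ideal G"
| smult: "x \<in> fa_ideal G \<Longrightarrow> fa_smult c x \<in> fa_ideal G"
| mult: "x \<in> fa_ideal G \<Longrightarrow> fa_mult (fa_mono u) (fa_mult x (fa_mono w)) \<in> fa_ideal G"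

text \<open>KP_R(Lambda) is the quotient of the free algebra by this ideal; two elements of the
free algebra are equal in KP_R(Lambda) iff their difference lies in kp_ideal.\<close>

definition kp_ideal ::
  "'p set \<Rightarrow> 'p set \<Rightarrow> ('p \<Rightarrow> 'p) \<Rightarrow> ('p \<Rightarrow> 'p) \<Rightarrow> ('p \<Rightarrow> 'p \<Rightarrow> 'p)
   \<Rightarrow> ('p \<Rightarrow> ('k \<Rightarrow> nat)) \<Rightarrow> ('p, 'r::comm_ring_1) fa set" where
  "kp_ideal Lam V r s cmp d = fa_ideal (kp_relations Lam V r s cmp d)"

definition kp_eq ::
  "'p set \<Rightarrow> 'p set \<Rightarrow> ('p \<Rightarrow> 'p) \<Rightarrow> ('p \<Rightarrow> 'p) \<Rightarrow> ('p \<Rightarrow> 'p \<Rightarrow> 'p)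
   \<Rightarrow> ('p \<Rightarrow> ('k \<Rightarrow> nat)) \<Rightarrow> ('p, 'r::comm_ring_1) fa \<Rightarrow> ('p, 'r) fa \<Rightarrow> bool" where
  "kp_eq Lam V r s cmp d x y \<longleftrightarrow> fa_sub x y \<in> kp_ideal Lam V r s cmp d"

definition cycline_pair ::
  "'p set \<Rightarrow> 'p set \<Rightarrow> ('p \<Rightarrow> 'p) \<Rightarrow> ('p \<Rightarrow> 'p) \<Rightarrow> ('p \<Rightarrow> 'p \<Rightarrow> 'p)
   \<Rightarrow> ('p \<Rightarrow> ('k \<Rightarrow> nat)) \<Rightarrow> 'r::comm_ring_1 itself \<Rightarrow> 'p \<Rightarrow> 'p \<Rightarrow> bool" where
  "cycline_pair Lam V r s cmp d (_::'r itself) a b \<longleftrightarrow>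
     a \<in> Lam \<and> b \<in> Lam \<and> s a = s b \<and>
     (\<forall>g\<in>Lam. r g = s a \<longrightarrow>
        kp_eq Lam V r s cmp d
          (fa_mult (kp_s d (cmp a g)) (kp_sstar d (cmp a g)) :: ('p, 'r) fa)
          (fa_mult (kp_s d (cmp b g)) (kp_sstar d (cmp b g))))"

text \<open>Representatives (in the free algebra) of the elements of the cycline subalgebra:
the R-subalgebra generated by the s_alpha s_{beta*} with (alpha, beta) cycline.\<close>

inductive_set cycline_sub ::
  "'p set \<Rightarrow> 'p set \<Rightarrow> ('p \<Rightarrow> 'p) \<Rightarrow> ('p \<Rightarrow> 'p) \<Rightarrow> ('p \<Rightarrow> 'p \<Rightarrow> 'p)
   \<Rightarrow> ('p \<Rightarrow> ('k \<Rightarrow> nat)) \<Rightarrow> ('p, 'r::comm_ring_1) fa set"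
  for Lam V r s cmp d where
  gen: "cycline_pair Lam V r s cmp d TYPE('r) a b \<Longrightarrow>
        fa_mult (kp_s d a) (kp_sstar d b) \<in> cycline_sub Lam V r s cmp d"
| zero: "fa_zero \<in> cycline_sub Lam V r s cmp d"
| add: "x \<in> cycline_sub Lam V r s cmp d \<Longrightarrow> y \<in> cycline_sub Lam V r s cmp d \<Longrightarrow>
        fa_add x y \<in> cycline_sub Lam V r s cmp d"
| smult: "x \<in> cycline_sub Lam V r s cmp d \<Longrightarrow> fa_smult c x \<in> cycline_sub Lam V r s cmp d"
| mult: "x \<in> cycline_sub Lam V r s cmp d \<Longrightarrow> y \<in> cycline_sub Lam V r s cmp d \<Longrightarrow>
        fa_mult x y \<in> cycline_sub Lam V r s cmp d"

end

theory Submission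
  imports Defs "HOL-Library.Poly_Mapping"
begin

text \<open>
  For a cycline pair \<open>(a, b)\<close> the range projections \<open>p\<^sub>a\<^sub>g = s\<^sub>a\<^sub>g s\<^sub>a\<^sub>g\<^sup>*\<close> and
  \<open>p\<^sub>b\<^sub>g\<close> agree for every extension \<open>g\<close>. Given two cycline pairs \<open>(a, b)\<close> and \<open>(m, n)\<close>,
  choose a degree \<open>N\<close> above all four degrees and expand over the common extensions
  \<open>b g = m h\<close> of degree \<open>N\<close>: the product \<open>s\<^sub>a s\<^sub>b\<^sup>* s\<^sub>m s\<^sub>n\<^sup>*\<close> becomes a sum of terms
  \<open>s\<^sub>a\<^sub>g s\<^sub>n\<^sub>h\<^sup>*\<close>, which are again cycline generators and are each absorbed by the projection
  \<open>p\<^sub>b p\<^sub>m = p\<^sub>a p\<^sub>n\<close>. Expanding this projection over the common extensions \<open>n h' = a g'\<close>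
  and using \<open>s\<^sub>x s\<^sub>y\<^sup>* p\<^sub>x\<^sub>' = s\<^sub>x\<^sub>' s\<^sub>y\<^sub>'\<^sup>* p\<^sub>x\<close> for cycline pairs with \<open>d x - d y = d x' - d y'\<close>,
  the double sum rearranges into the expansion of \<open>s\<^sub>m s\<^sub>n\<^sup>* s\<^sub>a s\<^sub>b\<^sup>*\<close>. Commutation of the
  generators passes to the subalgebra they generate.
\<close>

lemma sum_swap_pairs:
  "(\<Sum>a \<in> A. \<Sum>b \<in> B. \<Sum>c \<in> C. \<Sum>e \<in> E. F a b c e) =
    (\<Sum>c \<in> C. \<Sum>e \<in> E. \<Sum>a \<in> A. \<Sum>b \<in> B. F a b c e)"
proof -
  have "(\<Sum>a \<in> A. \<Sum>b \<in> B. \<Sum>c \<in> C. \<Sum>e \<in> E. F a b c e) =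
      (\<Sum>a \<in> A. \<Sum>c \<in> C. \<Sum>b \<in> B. \<Sum>e \<in> E. F a b c e)"
    by (rule sum.cong[OF refl], rule sum.swap)
  also have "\<dots> = (\<Sum>a \<in> A. \<Sum>c \<in> C. \<Sum>e \<in> E. \<Sum>b \<in> B. F a b c e)"
    by (rule sum.cong[OF refl], rule sum.cong[OF refl], rule sum.swap)
  also have "\<dots> = (\<Sum>c \<in> C. \<Sum>a \<in> A. \<Sum>e \<in> E. \<Sum>b \<in> B. F a b c e)"
    by (rule sum.swap)
  also have "\<dots> = (\<Sum>c \<in> C. \<Sum>e \<in> E. \<Sum>a \<in> A. \<Sum>b \<in> B. F a b c e)"
    by (rule sum.cong[OF refl], rule sum.swap)
  finally show ?thesis .
qed

lemma mult_if_zero_right: "a * (if P then x else 0) = (if P then a * x else (0::'a::mult_zero))"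
  by simp

lemma mult_if_zero_left: "(if P then x else 0) * a = (if P then x * a else (0::'a::mult_zero))"
  by simp

section \<open>Congruence modulo a two-sided ideal\<close>

text \<open>Scalar multiplication is modelled as multiplication by the elements of \<open>C\<close>.\<close>

inductive_set subalgebra_gen :: "'a::ring_1 set \<Rightarrow> 'a set \<Rightarrow> 'a set" for C G where
  gen: "x \<in> G \<Longrightarrow> x \<in> subalgebra_gen C G"
| zero: "0 \<in> subalgebra_gen C G"
| add: "x \<in> subalgebra_gen C G \<Longrightarrow> y \<in> subalgebra_gen C G \<Longrightarrow> x + y \<in> subalgebra_gen C G"
| scale: "c \<in> C \<Longrightarrow> x \<in> subalgebra_gen C G \<Longrightarrow> c * x \<in> subalgebra_gen C G"
| mult: "x \<in> subalgebra_gen C G \<Longrightarrow> y \<in> subalgebra_gen C G \<Longrightarrow> x * y \<in> subalgebra_gen C G"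

locale two_sided_ideal =
  fixes J :: "'b::ring_1 set"
  assumes zero_mem: "0 \<in> J"
    and add_mem: "x \<in> J \<Longrightarrow> y \<in> J \<Longrightarrow> x + y \<in> J"
    and mult_left_mem: "x \<in> J \<Longrightarrow> a * x \<in> J"
    and mult_right_mem: "x \<in> J \<Longrightarrow> x * a \<in> J"
begin

definition cong :: "'b \<Rightarrow> 'b \<Rightarrow> bool" (infix "\<approx>" 50) where
  "x \<approx> y \<longleftrightarrow> x - y \<in> J"

lemma cong_refl [simp, intro]: "x \<approx> x"
  by (simp add: cong_def zero_mem)

lemma cong_sym: "x \<approx> y \<Longrightarrow> y \<approx> x"
  unfolding cong_def using mult_left_mem[of "x - y" "-1"] by simp

lemma cong_trans [trans]: "x \<approx> y \<Longrightarrow> y \<approx> z \<Longrightarrow> x \<approx> z"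
  unfolding cong_def using add_mem[of "x - y" "y - z"] by simp

lemma cong_add: "x \<approx> x' \<Longrightarrow> y \<approx> y' \<Longrightarrow> x + y \<approx> x' + y'"
  unfolding cong_def using add_mem[of "x - x'" "y - y'"] by (simp add: algebra_simps)

lemma cong_mult_left: "x \<approx> y \<Longrightarrow> a * x \<approx> a * y"
  unfolding cong_def using mult_left_mem[of "x - y" a] by (simp add: right_diff_distrib)

lemma cong_mult_right: "x \<approx> y \<Longrightarrow> x * a \<approx> y * a"
  unfolding cong_def using mult_right_mem[of "x - y" a] by (simp add: left_diff_distrib)

lemma cong_mult: "x \<approx> x' \<Longrightarrow> y \<approx> y' \<Longrightarrow> x * y \<approx> x' * y'"
  using cong_trans[OF cong_mult_right[of x x' y] cong_mult_left[of y y' x']] by blast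

lemma cong_sum: "(\<And>i. i \<in> A \<Longrightarrow> f i \<approx> g i) \<Longrightarrow> sum f A \<approx> sum g A"
proof (induction A rule: infinite_finite_induct)
  case (insert x F)
  then have "f x + sum f F \<approx> g x + sum g F" by (intro cong_add) simp_all
  then show ?case using insert.hyps by simp
qed simp_all

lemma cong_if_zero: "(P \<Longrightarrow> x \<approx> y) \<Longrightarrow> (if P then x else 0) \<approx> (if P then y else 0)"
  by auto

lemma cong_commute_subalgebra_gen:
  assumes central: "\<And>c z. c \<in> C \<Longrightarrow> c * z = z * c"
    and gen: "\<And>g. g \<in> G \<Longrightarrow> x * g \<approx> g * x"
    and y: "y \<in> subalgebra_gen C G"
  shows "x * y \<approx> y * x"
  using y
proof (induction rule: subalgebra_gen.induct)
  case (gen g)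
  then show ?case by (rule assms(2))
next
  case zero
  then show ?case by simp
next
  case (add y1 y2)
  have "x * y1 + x * y2 \<approx> y1 * x + y2 * x" using add.IH by (rule cong_add)
  then show ?case by (simp add: distrib_left distrib_right)
next
  case (scale c y)
  have "x * (c * y) = c * (x * y)" by (metis central[OF scale.hyps(1)] mult.assoc)
  also have "\<dots> \<approx> c * (y * x)" using scale.IH by (rule cong_mult_left)
  finally show ?case by (simp add: mult.assoc)
next
  case (mult y1 y2)
  have "x * (y1 * y2) \<approx> (y1 * x) * y2" using mult.IH(1) by (simp add: cong_mult_right flip: mult.assoc)
  also have "\<dots> = y1 * (x * y2)" by (simp add: mult.assoc)
  also have "\<dots> \<approx> y1 * (y2 * x)" using mult.IH(2) by (rule cong_mult_left)
  finally show ?case by (simp add: mult.assoc)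
qed

lemma subalgebra_gen_commute:
  assumes central: "\<And>c z. c \<in> C \<Longrightarrow> c * z = z * c"
    and gens: "\<And>g h. g \<in> G \<Longrightarrow> h \<in> G \<Longrightarrow> g * h \<approx> h * g"
    and x: "x \<in> subalgebra_gen C G" and y: "y \<in> subalgebra_gen C G"
  shows "x * y \<approx> y * x"
proof -
  have "g * x \<approx> x * g" if "g \<in> G" for g
    using central gens[OF that] x by (rule cong_commute_subalgebra_gen)
  then have "x * g \<approx> g * x" if "g \<in> G" for g
    using that by (blast intro: cong_sym)
  then show ?thesis using central y by (blast intro: cong_commute_subalgebra_gen)
qed

end

section \<open>Paths in a k-graph\<close>

definition deg_diff :: "('k \<Rightarrow> nat) \<Rightarrow> ('k \<Rightarrow> nat) \<Rightarrow> ('k \<Rightarrow> nat)" where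
  "deg_diff m n = (\<lambda>i. m i - n i)"

lemma deg_add_deg_diff: "n \<le> m \<Longrightarrow> deg_add n (deg_diff m n) = m"
  by (auto simp: deg_add_def deg_diff_def le_fun_def)

lemma deg_add_commute: "deg_add m n = deg_add n m"
  by (auto simp: deg_add_def)

lemma le_deg_add: "m \<le> deg_add m n" "n \<le> deg_add m n"
  by (auto simp: deg_add_def le_fun_def)

lemma ex1_pair_unique:
  assumes "\<exists>!(x, y). Q x y" "Q a b" "Q c e"
  shows "a = c \<and> b = e"
proof -
  obtain z where "\<And>p. (case p of (x, y) \<Rightarrow> Q x y) \<Longrightarrow> p = z"
    using assms(1) by (elim ex1E) blast
  then have "(a, b) = z" "(c, e) = z" using assms(2,3) by simp_all
  then show ?thesis by (metis prod.inject)
qed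

locale kgraph =
  fixes Lam V :: "'p set" and r s :: "'p \<Rightarrow> 'p" and cmp :: "'p \<Rightarrow> 'p \<Rightarrow> 'p"
    and d :: "'p \<Rightarrow> ('k::finite \<Rightarrow> nat)"
  assumes kgraph: "is_kgraph Lam V r s cmp d"
    and row_finite: "row_finite_no_sources Lam V r d"
begin

lemma vertex_mem: "v \<in> V \<Longrightarrow> v \<in> Lam"
  using kgraph unfolding is_kgraph_def by (simp add: subset_iff)

lemma range_mem: "l \<in> Lam \<Longrightarrow> r l \<in> V"
  using kgraph unfolding is_kgraph_def by simp

lemma source_mem: "l \<in> Lam \<Longrightarrow> s l \<in> V"
  using kgraph unfolding is_kgraph_def by simp

lemma range_vertex: "v \<in> V \<Longrightarrow> r v = v"
  using kgraph unfolding is_kgraph_def by simp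

lemma source_vertex: "v \<in> V \<Longrightarrow> s v = v"
  using kgraph unfolding is_kgraph_def by simp

lemma deg_vertex: "v \<in> V \<Longrightarrow> d v = deg_zero"
  using kgraph unfolding is_kgraph_def by simp

lemma comp_range: "l \<in> Lam \<Longrightarrow> cmp (r l) l = l"
  using kgraph unfolding is_kgraph_def by simp

lemma comp_source: "l \<in> Lam \<Longrightarrow> cmp l (s l) = l"
  using kgraph unfolding is_kgraph_def by simp

lemma comp_mem: "l \<in> Lam \<Longrightarrow> m \<in> Lam \<Longrightarrow> s l = r m \<Longrightarrow> cmp l m \<in> Lam"
  using kgraph unfolding is_kgraph_def by simp

lemma range_comp: "l \<in> Lam \<Longrightarrow> m \<in> Lam \<Longrightarrow> s l = r m \<Longrightarrow> r (cmp l m) = r l"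
  using kgraph unfolding is_kgraph_def by simp

lemma source_comp: "l \<in> Lam \<Longrightarrow> m \<in> Lam \<Longrightarrow> s l = r m \<Longrightarrow> s (cmp l m) = s m"
  using kgraph unfolding is_kgraph_def by simp

lemma deg_comp: "l \<in> Lam \<Longrightarrow> m \<in> Lam \<Longrightarrow> s l = r m \<Longrightarrow> d (cmp l m) = deg_add (d l) (d m)"
  using kgraph unfolding is_kgraph_def by simp

lemma comp_assoc:
  "l \<in> Lam \<Longrightarrow> m \<in> Lam \<Longrightarrow> n \<in> Lam \<Longrightarrow> s l = r m \<Longrightarrow> s m = r n \<Longrightarrow>
    cmp (cmp l m) n = cmp l (cmp m n)"
  using kgraph unfolding is_kgraph_def by simp

lemma unique_factorisation:
  "l \<in> Lam \<Longrightarrow> d l = deg_add m n \<Longrightarrow>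
   \<exists>!(mu, nu). mu \<in> Lam \<and> nu \<in> Lam \<and> s mu = r nu \<and> d mu = m \<and> d nu = n \<and> l = cmp mu nu"
  using kgraph unfolding is_kgraph_def by simp

lemma deg_zero_vertex:
  assumes l: "l \<in> Lam" and deg: "d l = deg_zero"
  shows "l \<in> V"
proof -
  have factorisation: "\<exists>!(mu, nu). mu \<in> Lam \<and> nu \<in> Lam \<and> s mu = r nu \<and> d mu = deg_zero
      \<and> d nu = deg_zero \<and> l = cmp mu nu"
    using unique_factorisation[OF l, of deg_zero deg_zero] deg by (simp add: deg_add_def deg_zero_def)
  have range: "r l \<in> Lam" "d (r l) = deg_zero" "s (r l) = r l" "cmp (r l) l = l"
    using l range_mem vertex_mem deg_vertex source_vertex comp_range by simp_all
  have source: "s l \<in> Lam" "d (s l) = deg_zero" "r (s l) = s l" "cmp l (s l) = l"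
    using l source_mem vertex_mem deg_vertex range_vertex comp_source by simp_all
  from factorisation have "r l = l \<and> l = s l"
    by (rule ex1_pair_unique) (use l deg range source in simp_all)
  then show ?thesis using range_mem l by metis
qed

lemma comp_left_cancel:
  assumes "a \<in> Lam" "g \<in> Lam" "h \<in> Lam" "r g = s a" "r h = s a" "d g = d h"
    and "cmp a g = cmp a h"
  shows "g = h"
proof -
  have "\<exists>!(mu, nu). mu \<in> Lam \<and> nu \<in> Lam \<and> s mu = r nu \<and> d mu = d a \<and> d nu = d g
      \<and> cmp a g = cmp mu nu"
    using unique_factorisation comp_mem deg_comp assms by simp
  then show ?thesis
    by (rule ex1_pair_unique[THEN conjunct2]) (use assms in auto)
qed

definition paths_at :: "'p \<Rightarrow> ('k \<Rightarrow> nat) \<Rightarrow> 'p set" where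
  "paths_at v n = {l \<in> Lam. r l = v \<and> d l = n}"

lemma mem_paths_at [simp]: "l \<in> paths_at v n \<longleftrightarrow> l \<in> Lam \<and> r l = v \<and> d l = n"
  by (simp add: paths_at_def)

lemma finite_paths_at: "v \<in> V \<Longrightarrow> finite (paths_at v n)"
  using row_finite unfolding row_finite_no_sources_def paths_at_def by blast

lemma paths_at_deg_zero:
  assumes "v \<in> V"
  shows "paths_at v deg_zero = {v}"
proof
  show "paths_at v deg_zero \<subseteq> {v}"
  proof
    fix l assume "l \<in> paths_at v deg_zero"
    then have "l \<in> V" "r l = v" using deg_zero_vertex by simp_all
    then show "l \<in> {v}" using range_vertex by simp
  qed
  show "{v} \<subseteq> paths_at v deg_zero" using assms vertex_mem range_vertex deg_vertex by simp
qed

lemma comp_paths_at: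
  assumes "a \<in> Lam" "g \<in> paths_at (s a) n"
  shows "cmp a g \<in> Lam" "d (cmp a g) = deg_add (d a) n" "r (cmp a g) = r a" "s (cmp a g) = s g"
  using assms comp_mem deg_comp range_comp source_comp by auto

definition extensions :: "('k \<Rightarrow> nat) \<Rightarrow> 'p \<Rightarrow> 'p set" where
  "extensions N a = paths_at (s a) (deg_diff N (d a))"

lemma extensionsD:
  assumes a: "a \<in> Lam" and "d a \<le> N" and g: "g \<in> extensions N a"
  shows "g \<in> Lam" "r g = s a" "d g = deg_diff N (d a)"
    and "cmp a g \<in> Lam" "d (cmp a g) = N" "s (cmp a g) = s g"
proof -
  have "g \<in> paths_at (s a) (deg_diff N (d a))" using g by (simp add: extensions_def)
  then show "g \<in> Lam" "r g = s a" "d g = deg_diff N (d a)" "cmp a g \<in> Lam" "s (cmp a g) = s g"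
      and "d (cmp a g) = N"
    using comp_paths_at[OF a] deg_add_deg_diff[OF \<open>d a \<le> N\<close>] by simp_all
qed

lemma finite_extensions: "a \<in> Lam \<Longrightarrow> finite (extensions N a)"
  unfolding extensions_def using finite_paths_at source_mem by blast

lemma extensions_left_cancel:
  assumes "a \<in> Lam" "d a \<le> N" "g \<in> extensions N a" "h \<in> extensions N a"
    and "cmp a g = cmp a h"
  shows "g = h"
proof (rule comp_left_cancel)
  show "a \<in> Lam" "cmp a g = cmp a h" by fact+
  show "g \<in> Lam" "r g = s a" using extensionsD[OF assms(1-3)] by simp_all
  show "h \<in> Lam" "r h = s a" using extensionsD[OF assms(1,2,4)] by simp_all
  show "d g = d h" using extensionsD(3)[OF assms(1-3)] extensionsD(3)[OF assms(1,2,4)] by simp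
qed

lemma deg_comp_extension:
  assumes "a \<in> Lam" "s a = s b" "g \<in> extensions N b"
  shows "d (cmp a g) = deg_add (d a) (deg_diff N (d b))"
  using assms deg_comp[of a g] by (simp add: extensions_def)

lemma deg_add_comp_extensions:
  assumes "a \<in> Lam" "b \<in> Lam" "s a = s b" "d a \<le> N" "d b \<le> N"
    and "g \<in> extensions N b" "g' \<in> extensions N a"
  shows "deg_add (d (cmp a g)) (d (cmp b g')) = deg_add N N"
proof
  fix i
  have "d a i \<le> N i" "d b i \<le> N i" using assms(4,5) by (simp_all add: le_fun_def)
  moreover have "d (cmp a g) i = d a i + (N i - d b i)" "d (cmp b g') i = d b i + (N i - d a i)"
    using deg_comp_extension[of a b g N] deg_comp_extension[of b a g' N] assms
    by (simp_all add: deg_add_def deg_diff_def)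
  ultimately show "deg_add (d (cmp a g)) (d (cmp b g')) i = deg_add N N i"
    by (simp add: deg_add_def)
qed

end

section \<open>Kumjian-Pask families modulo an ideal\<close>

text \<open>\<open>S l\<close> and \<open>T l\<close> stand for \<open>s\<^sub>l\<close> and \<open>s\<^sub>l\<^sub>*\<close>. The relations only have to hold modulo
  \<open>J\<close>, so that the free algebra modulo the ideal of the Kumjian-Pask relations is an
  instance.\<close>

locale kp_family = kgraph Lam V r s cmp d + two_sided_ideal J
  for Lam V :: "'p set" and r s :: "'p \<Rightarrow> 'p" and cmp :: "'p \<Rightarrow> 'p \<Rightarrow> 'p"
    and d :: "'p \<Rightarrow> ('k::finite \<Rightarrow> nat)" and J :: "'b::ring_1 set" +
  fixes P S T :: "'p \<Rightarrow> 'b"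
  assumes S_deg_zero: "d l = deg_zero \<Longrightarrow> S l = P l"
    and T_deg_zero: "d l = deg_zero \<Longrightarrow> T l = P l"
    and KP1_idem: "v \<in> V \<Longrightarrow> P v * P v \<approx> P v"
    and KP1_orth: "v \<in> V \<Longrightarrow> w \<in> V \<Longrightarrow> v \<noteq> w \<Longrightarrow> P v * P w \<approx> 0"
    and KP2_S: "l \<in> Lam \<Longrightarrow> m \<in> Lam \<Longrightarrow> d l \<noteq> deg_zero \<Longrightarrow> d m \<noteq> deg_zero \<Longrightarrow> r m = s l
      \<Longrightarrow> S l * S m \<approx> S (cmp l m)"
    and KP2_T: "l \<in> Lam \<Longrightarrow> m \<in> Lam \<Longrightarrow> d l \<noteq> deg_zero \<Longrightarrow> d m \<noteq> deg_zero \<Longrightarrow> r m = s l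
      \<Longrightarrow> T m * T l \<approx> T (cmp l m)"
    and KP2_P_S: "l \<in> Lam \<Longrightarrow> d l \<noteq> deg_zero \<Longrightarrow> P (r l) * S l \<approx> S l"
    and KP2_S_P: "l \<in> Lam \<Longrightarrow> d l \<noteq> deg_zero \<Longrightarrow> S l * P (s l) \<approx> S l"
    and KP2_P_T: "l \<in> Lam \<Longrightarrow> d l \<noteq> deg_zero \<Longrightarrow> P (s l) * T l \<approx> T l"
    and KP2_T_P: "l \<in> Lam \<Longrightarrow> d l \<noteq> deg_zero \<Longrightarrow> T l * P (r l) \<approx> T l"
    and KP3: "l \<in> Lam \<Longrightarrow> m \<in> Lam \<Longrightarrow> d l \<noteq> deg_zero \<Longrightarrow> d l = d m
      \<Longrightarrow> T l * S m \<approx> (if l = m then P (s l) else 0)"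
    and KP4: "v \<in> V \<Longrightarrow> n \<noteq> deg_zero \<Longrightarrow> P v \<approx> (\<Sum>l \<in> {l \<in> Lam. r l = v \<and> d l = n}. S l * T l)"
begin

lemma P_orth: "v \<in> V \<Longrightarrow> w \<in> V \<Longrightarrow> P v * P w \<approx> (if v = w then P v else 0)"
  using KP1_idem KP1_orth by auto

lemma P_S: assumes "l \<in> Lam" shows "P (r l) * S l \<approx> S l"
proof (cases "d l = deg_zero")
  case True
  then have "l \<in> V" using deg_zero_vertex assms by auto
  then show ?thesis using True S_deg_zero KP1_idem range_vertex by simp
qed (use assms KP2_P_S in auto)

lemma S_P: assumes "l \<in> Lam" shows "S l * P (s l) \<approx> S l"
proof (cases "d l = deg_zero")
  case True
  then have "l \<in> V" using deg_zero_vertex assms by auto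
  then show ?thesis using True S_deg_zero KP1_idem source_vertex by simp
qed (use assms KP2_S_P in auto)

lemma P_T: assumes "l \<in> Lam" shows "P (s l) * T l \<approx> T l"
proof (cases "d l = deg_zero")
  case True
  then have "l \<in> V" using deg_zero_vertex assms by auto
  then show ?thesis using True T_deg_zero KP1_idem source_vertex by simp
qed (use assms KP2_P_T in auto)

lemma T_P: assumes "l \<in> Lam" shows "T l * P (r l) \<approx> T l"
proof (cases "d l = deg_zero")
  case True
  then have "l \<in> V" using deg_zero_vertex assms by auto
  then show ?thesis using True T_deg_zero KP1_idem range_vertex by simp
qed (use assms KP2_T_P in auto)

lemma S_comp:
  assumes "l \<in> Lam" "m \<in> Lam" "s l = r m"
  shows "S l * S m \<approx> S (cmp l m)"
proof (cases "d l = deg_zero")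
  case True
  then have "l \<in> V" using deg_zero_vertex assms by auto
  then have "l = r m" "cmp l m = m" using assms source_vertex comp_range by auto
  then show ?thesis using True S_deg_zero P_S[OF assms(2)] by simp
next
  case False
  show ?thesis
  proof (cases "d m = deg_zero")
    case True
    then have "m \<in> V" using deg_zero_vertex assms by auto
    then have "m = s l" "cmp l m = l" using assms range_vertex comp_source by auto
    then show ?thesis using True S_deg_zero S_P[OF assms(1)] by simp
  qed (use assms False KP2_S in auto)
qed

lemma T_comp:
  assumes "l \<in> Lam" "m \<in> Lam" "s l = r m"
  shows "T m * T l \<approx> T (cmp l m)"
proof (cases "d l = deg_zero")
  case True
  then have "l \<in> V" using deg_zero_vertex assms by auto
  then have "l = r m" "cmp l m = m" using assms source_vertex comp_range by auto
  then show ?thesis using True T_deg_zero T_P[OF assms(2)] by simp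
next
  case False
  show ?thesis
  proof (cases "d m = deg_zero")
    case True
    then have "m \<in> V" using deg_zero_vertex assms by auto
    then have "m = s l" "cmp l m = l" using assms range_vertex comp_source by auto
    then show ?thesis using True T_deg_zero P_T[OF assms(1)] by simp
  qed (use assms False KP2_T in auto)
qed

lemma T_S:
  assumes "l \<in> Lam" "m \<in> Lam" "d l = d m"
  shows "T l * S m \<approx> (if l = m then P (s l) else 0)"
proof (cases "d l = deg_zero")
  case True
  then have lm: "l \<in> V" "m \<in> V" using deg_zero_vertex assms by auto
  have "T l = P l" "S m = P m" using True assms(3) T_deg_zero S_deg_zero by auto
  moreover have "s l = l" using lm source_vertex by auto
  ultimately show ?thesis using P_orth[OF lm] by (cases "l = m") auto
qed (use assms KP3 in auto)

lemma P_sum: assumes "v \<in> V" shows "P v \<approx> (\<Sum>l \<in> paths_at v n. S l * T l)"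
proof (cases "n = deg_zero")
  case True
  have "(\<Sum>l \<in> paths_at v n. S l * T l) = P v * P v"
    using True paths_at_deg_zero[OF assms] deg_vertex[OF assms] S_deg_zero T_deg_zero by simp
  then show ?thesis using KP1_idem[OF assms] cong_sym by simp
qed (use assms KP4 in \<open>auto simp: paths_at_def\<close>)

definition proj :: "'p \<Rightarrow> 'b" where
  "proj l = S l * T l"

lemma proj_S: assumes "l \<in> Lam" shows "proj l * S l \<approx> S l"
proof -
  have "proj l * S l = S l * (T l * S l)" by (simp add: proj_def mult.assoc)
  also have "\<dots> \<approx> S l * P (s l)" using T_S[OF assms assms] by (simp add: cong_mult_left)
  also have "\<dots> \<approx> S l" using S_P[OF assms] .
  finally show ?thesis .
qed

lemma T_proj: assumes "l \<in> Lam" shows "T l * proj l \<approx> T l"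
proof -
  have "T l * proj l = (T l * S l) * T l" by (simp add: proj_def mult.assoc)
  also have "\<dots> \<approx> P (s l) * T l" using T_S[OF assms assms] by (simp add: cong_mult_right)
  also have "\<dots> \<approx> T l" using P_T[OF assms] .
  finally show ?thesis .
qed

lemma proj_idem: assumes "l \<in> Lam" shows "proj l * proj l \<approx> proj l"
proof -
  have "proj l * proj l = (proj l * S l) * T l" by (simp add: proj_def mult.assoc)
  also have "\<dots> \<approx> S l * T l" using proj_S[OF assms] by (rule cong_mult_right)
  finally show ?thesis by (simp add: proj_def)
qed

lemma proj_orth:
  assumes "x \<in> Lam" "y \<in> Lam" "d x = d y"
  shows "proj x * proj y \<approx> (if x = y then proj x else 0)"
proof (cases "x = y")
  case True
  then show ?thesis using proj_idem assms by simp
next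
  case False
  have "proj x * proj y = S x * (T x * S y) * T y" by (simp add: proj_def mult.assoc)
  also have "\<dots> \<approx> S x * 0 * T y" using T_S[OF assms] False by (intro cong_mult_right cong_mult_left) simp
  finally show ?thesis using False by simp
qed

lemma S_T_expand:
  assumes "a \<in> Lam" "b \<in> Lam" "s a = s b"
  shows "S a * T b \<approx> (\<Sum>g \<in> paths_at (s a) n. S (cmp a g) * T (cmp b g))"
proof -
  have "S a * T b \<approx> S a * P (s a) * T b" by (rule cong_sym[OF cong_mult_right[OF S_P[OF assms(1)]]])
  also have "\<dots> \<approx> S a * (\<Sum>g \<in> paths_at (s a) n. S g * T g) * T b"
    using P_sum[OF source_mem[OF assms(1)]] by (intro cong_mult_right cong_mult_left)
  also have "\<dots> = (\<Sum>g \<in> paths_at (s a) n. (S a * S g) * (T g * T b))"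
    by (simp add: sum_distrib_left sum_distrib_right mult.assoc)
  also have "\<dots> \<approx> (\<Sum>g \<in> paths_at (s a) n. S (cmp a g) * T (cmp b g))"
    using assms by (intro cong_sum cong_mult S_comp T_comp) auto
  finally show ?thesis .
qed

lemma proj_expand: "a \<in> Lam \<Longrightarrow> proj a \<approx> (\<Sum>g \<in> paths_at (s a) n. proj (cmp a g))"
  unfolding proj_def using S_T_expand by blast

lemma proj_product_expand:
  assumes a: "a \<in> Lam" and b: "b \<in> Lam" and da: "d a \<le> N" and db: "d b \<le> N"
  shows "proj a * proj b \<approx>
    (\<Sum>g \<in> extensions N a. \<Sum>h \<in> extensions N b. if cmp a g = cmp b h then proj (cmp a g) else 0)"
proof -
  have "proj a * proj b \<approx>
      (\<Sum>g \<in> extensions N a. proj (cmp a g)) * (\<Sum>h \<in> extensions N b. proj (cmp b h))"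
    unfolding extensions_def using proj_expand[OF a] proj_expand[OF b] by (rule cong_mult)
  also have "\<dots> = (\<Sum>g \<in> extensions N a. \<Sum>h \<in> extensions N b. proj (cmp a g) * proj (cmp b h))"
    by (rule sum_product)
  also have "\<dots> \<approx> (\<Sum>g \<in> extensions N a. \<Sum>h \<in> extensions N b.
      if cmp a g = cmp b h then proj (cmp a g) else 0)"
    using proj_orth extensionsD[OF a da] extensionsD[OF b db] by (intro cong_sum) simp
  finally show ?thesis .
qed

lemma proj_commute:
  assumes a: "a \<in> Lam" and b: "b \<in> Lam"
  shows "proj a * proj b \<approx> proj b * proj a"
proof -
  define N where "N = deg_add (d a) (d b)"
  have da: "d a \<le> N" and db: "d b \<le> N" unfolding N_def by (simp_all add: le_deg_add)
  have "proj a * proj b \<approx>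
      (\<Sum>g \<in> extensions N a. \<Sum>h \<in> extensions N b. if cmp a g = cmp b h then proj (cmp a g) else 0)"
    by (rule proj_product_expand[OF a b da db])
  also have "\<dots> = (\<Sum>h \<in> extensions N b. \<Sum>g \<in> extensions N a.
      if cmp b h = cmp a g then proj (cmp b h) else 0)"
    by (subst sum.swap) (rule sum.cong[OF refl], rule sum.cong[OF refl], auto)
  also have "\<dots> \<approx> proj b * proj a" by (rule cong_sym[OF proj_product_expand[OF b a db da]])
  finally show ?thesis .
qed

definition cycline :: "'p \<Rightarrow> 'p \<Rightarrow> bool" where
  "cycline a b \<longleftrightarrow> a \<in> Lam \<and> b \<in> Lam \<and> s a = s b \<and>
     (\<forall>g \<in> Lam. r g = s a \<longrightarrow> proj (cmp a g) \<approx> proj (cmp b g))"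

lemma cyclineD:
  assumes "cycline a b"
  shows "a \<in> Lam" "b \<in> Lam" "s a = s b"
    and "\<And>g. g \<in> Lam \<Longrightarrow> r g = s a \<Longrightarrow> proj (cmp a g) \<approx> proj (cmp b g)"
  using assms unfolding cycline_def by auto

lemma cycline_proj:
  assumes "cycline a b"
  shows "proj a \<approx> proj b"
proof -
  have "s a \<in> Lam" "r (s a) = s a" using cyclineD[OF assms] source_mem vertex_mem range_vertex by auto
  then have "proj (cmp a (s a)) \<approx> proj (cmp b (s a))" using cyclineD(4)[OF assms] by blast
  then show ?thesis using cyclineD[OF assms] comp_source by metis
qed

lemma cycline_trans:
  assumes "cycline a b" "cycline b c"
  shows "cycline a c"
proof -
  have "proj (cmp a g) \<approx> proj (cmp c g)" if "g \<in> Lam" "r g = s a" for g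
    using cyclineD(4)[OF assms(1) that] cyclineD(4)[OF assms(2)] cyclineD(3)[OF assms(1)] that
    by (metis cong_trans)
  then show ?thesis using cyclineD[OF assms(1)] cyclineD[OF assms(2)] unfolding cycline_def by simp
qed

lemma cycline_comp:
  assumes ab: "cycline a b" and g: "g \<in> Lam" "r g = s a"
  shows "cycline (cmp a g) (cmp b g)"
proof -
  note ab = cyclineD[OF ab]
  have ag: "cmp a g \<in> Lam" "s (cmp a g) = s g" using ab g comp_mem source_comp by auto
  have bg: "cmp b g \<in> Lam" "s (cmp b g) = s g" using ab g comp_mem source_comp by auto
  have "proj (cmp (cmp a g) x) \<approx> proj (cmp (cmp b g) x)" if x: "x \<in> Lam" "r x = s g" for x
  proof -
    have "r (cmp g x) = s a" "cmp g x \<in> Lam" using g x range_comp comp_mem by auto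
    then have "proj (cmp a (cmp g x)) \<approx> proj (cmp b (cmp g x))" using ab(4) by blast
    then show ?thesis using comp_assoc ab g x by simp
  qed
  then show ?thesis using ag bg unfolding cycline_def by simp
qed

lemma cycline_absorb_proj:
  assumes "cycline a b"
  shows "S a * T b * proj a \<approx> S a * T b"
proof -
  have "S a * T b * proj a = S a * (T b * proj a)" by (simp add: mult.assoc)
  also have "\<dots> \<approx> S a * (T b * proj b)" using cycline_proj[OF assms] by (intro cong_mult_left)
  also have "\<dots> \<approx> S a * T b" using T_proj cyclineD(2)[OF assms] by (intro cong_mult_left)
  finally show ?thesis .
qed

text \<open>If \<open>l\<close> forms cycline pairs with two distinct paths of the same degree, then \<open>proj l\<close>
  lies below two orthogonal projections and hence vanishes.\<close>

lemma cycline_partners_cong: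
  assumes lx: "cycline l x" and ly: "cycline l y" and deg: "d x = d y"
  shows "S l * T x \<approx> S l * T y"
proof (cases "x = y")
  case False
  have l: "l \<in> Lam" and x: "x \<in> Lam" and y: "y \<in> Lam" using cyclineD lx ly by auto
  have "proj l \<approx> proj l * proj l" using proj_idem[OF l] by (rule cong_sym)
  also have "\<dots> \<approx> proj x * proj y" using cycline_proj[OF lx] cycline_proj[OF ly] by (rule cong_mult)
  also have "\<dots> \<approx> 0" using proj_orth[OF x y deg] False by simp
  finally have "proj l \<approx> 0" .
  then have vanish: "S l * T z \<approx> 0" for z
  proof -
    have "S l * T z \<approx> proj l * S l * T z" using proj_S[OF l] by (rule cong_sym[OF cong_mult_right])
    also have "\<dots> \<approx> 0 * S l * T z" using \<open>proj l \<approx> 0\<close> by (intro cong_mult_right)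
    finally show ?thesis by simp
  qed
  show ?thesis using vanish[of x] cong_sym[OF vanish[of y]] by (rule cong_trans)
qed simp

lemma cycline_times_proj:
  assumes ab: "cycline a b" and a': "a' \<in> Lam"
  shows "S a * T b * proj a' \<approx>
    (\<Sum>g \<in> paths_at (s a) (d a'). \<Sum>h \<in> paths_at (s a') (d a).
      if cmp a g = cmp a' h then S (cmp a g) * T (cmp b g) else 0)"
proof -
  note ab' = cyclineD[OF ab]
  have "S a * T b * proj a' \<approx>
      (\<Sum>g \<in> paths_at (s a) (d a'). S (cmp a g) * T (cmp b g)) * (\<Sum>h \<in> paths_at (s a') (d a). proj (cmp a' h))"
    using S_T_expand[OF ab'(1,2,3)] proj_expand[OF a'] by (rule cong_mult)
  also have "\<dots> = (\<Sum>g \<in> paths_at (s a) (d a'). \<Sum>h \<in> paths_at (s a') (d a).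
      S (cmp a g) * T (cmp b g) * proj (cmp a' h))"
    by (rule sum_product)
  also have "\<dots> \<approx> (\<Sum>g \<in> paths_at (s a) (d a'). \<Sum>h \<in> paths_at (s a') (d a).
      if cmp a g = cmp a' h then S (cmp a g) * T (cmp b g) else 0)"
  proof (intro cong_sum)
    fix g h assume g: "g \<in> paths_at (s a) (d a')" and h: "h \<in> paths_at (s a') (d a)"
    have ag: "cmp a g \<in> Lam" "d (cmp a g) = deg_add (d a) (d a')" using comp_paths_at[OF ab'(1) g] by auto
    have a'h: "cmp a' h \<in> Lam" "d (cmp a' h) = deg_add (d a') (d a)" using comp_paths_at[OF a' h] by auto
    have "d (cmp a g) = d (cmp a' h)" using ag a'h deg_add_commute by metis
    moreover have absorb: "S (cmp a g) * T (cmp b g) * proj (cmp a g) \<approx> S (cmp a g) * T (cmp b g)"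
      using g by (intro cycline_absorb_proj cycline_comp[OF ab]) simp_all
    ultimately have "S (cmp a g) * T (cmp b g) * proj (cmp a' h) \<approx>
        S (cmp a g) * T (cmp b g) * (proj (cmp a g) * proj (cmp a' h))"
      by (metis cong_sym cong_mult_right mult.assoc)
    also have "\<dots> \<approx> S (cmp a g) * T (cmp b g) * (if cmp a g = cmp a' h then proj (cmp a g) else 0)"
      using proj_orth ag a'h \<open>d (cmp a g) = d (cmp a' h)\<close> by (intro cong_mult_left) simp
    also have "\<dots> \<approx> (if cmp a g = cmp a' h then S (cmp a g) * T (cmp b g) else 0)"
      unfolding mult_if_zero_right by (rule cong_if_zero[OF absorb])
    finally show "S (cmp a g) * T (cmp b g) * proj (cmp a' h) \<approx>
        (if cmp a g = cmp a' h then S (cmp a g) * T (cmp b g) else 0)" .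
  qed
  finally show ?thesis .
qed

lemma cycline_proj_exchange:
  assumes ab: "cycline a b" and ab': "cycline a' b'"
    and deg: "deg_add (d a) (d b') = deg_add (d a') (d b)"
  shows "S a * T b * proj a' \<approx> S a' * T b' * proj a"
proof -
  note ab1 = cyclineD[OF ab] and ab1' = cyclineD[OF ab']
  have "S a * T b * proj a' \<approx>
      (\<Sum>g \<in> paths_at (s a) (d a'). \<Sum>h \<in> paths_at (s a') (d a).
        if cmp a g = cmp a' h then S (cmp a g) * T (cmp b g) else 0)"
    by (rule cycline_times_proj[OF ab ab1'(1)])
  also have "\<dots> \<approx> (\<Sum>g \<in> paths_at (s a) (d a'). \<Sum>h \<in> paths_at (s a') (d a).
      if cmp a' h = cmp a g then S (cmp a' h) * T (cmp b' h) else 0)"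
  proof (intro cong_sum)
    fix g h assume g: "g \<in> paths_at (s a) (d a')" and h: "h \<in> paths_at (s a') (d a)"
    have "deg_add (d b) (d a') = deg_add (d b') (d a)"
      using deg by (simp add: deg_add_def fun_eq_iff add.commute)
    then have "d (cmp b g) = d (cmp b' h)"
      using g h ab1 ab1' deg_comp by simp
    moreover have "cycline (cmp a g) (cmp b g)" "cycline (cmp a' h) (cmp b' h)"
      using g h by (simp_all add: cycline_comp ab ab')
    ultimately show "(if cmp a g = cmp a' h then S (cmp a g) * T (cmp b g) else 0) \<approx>
        (if cmp a' h = cmp a g then S (cmp a' h) * T (cmp b' h) else 0)"
      by (auto intro: cycline_partners_cong)
  qed
  also have "\<dots> = (\<Sum>h \<in> paths_at (s a') (d a). \<Sum>g \<in> paths_at (s a) (d a').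
      if cmp a' h = cmp a g then S (cmp a' h) * T (cmp b' h) else 0)"
    by (rule sum.swap)
  also have "\<dots> \<approx> S a' * T b' * proj a"
    by (rule cong_sym[OF cycline_times_proj[OF ab' ab1(1)]])
  finally show ?thesis .
qed

lemma T_S_expand:
  assumes b: "b \<in> Lam" and m: "m \<in> Lam" and db: "d b \<le> N" and dm: "d m \<le> N"
  shows "T b * S m \<approx>
    (\<Sum>g \<in> extensions N b. \<Sum>h \<in> extensions N m. if cmp b g = cmp m h then S g * T h else 0)"
proof -
  have T_expand: "T b \<approx> (\<Sum>g \<in> extensions N b. S g * T (cmp b g))"
  proof -
    have "T b \<approx> P (s b) * T b" using P_T[OF b] by (rule cong_sym)
    also have "\<dots> \<approx> (\<Sum>g \<in> extensions N b. S g * T g) * T b"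
      unfolding extensions_def using P_sum[OF source_mem[OF b]] by (rule cong_mult_right)
    also have "\<dots> = (\<Sum>g \<in> extensions N b. S g * (T g * T b))"
      by (simp add: sum_distrib_right mult.assoc)
    also have "\<dots> \<approx> (\<Sum>g \<in> extensions N b. S g * T (cmp b g))"
      using T_comp[OF b] extensionsD[OF b db] by (intro cong_sum cong_mult_left) simp
    finally show ?thesis .
  qed
  have S_expand: "S m \<approx> (\<Sum>h \<in> extensions N m. S (cmp m h) * T h)"
  proof -
    have "S m \<approx> S m * P (s m)" using S_P[OF m] by (rule cong_sym)
    also have "\<dots> \<approx> S m * (\<Sum>h \<in> extensions N m. S h * T h)"
      unfolding extensions_def using P_sum[OF source_mem[OF m]] by (rule cong_mult_left)
    also have "\<dots> = (\<Sum>h \<in> extensions N m. (S m * S h) * T h)"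
      by (simp add: sum_distrib_left mult.assoc)
    also have "\<dots> \<approx> (\<Sum>h \<in> extensions N m. S (cmp m h) * T h)"
      using S_comp[OF m] extensionsD[OF m dm] by (intro cong_sum cong_mult_right) simp
    finally show ?thesis .
  qed
  have "T b * S m \<approx> (\<Sum>g \<in> extensions N b. S g * T (cmp b g)) * (\<Sum>h \<in> extensions N m. S (cmp m h) * T h)"
    using T_expand S_expand by (rule cong_mult)
  also have "\<dots> = (\<Sum>g \<in> extensions N b. \<Sum>h \<in> extensions N m. S g * (T (cmp b g) * S (cmp m h)) * T h)"
    by (simp add: sum_product mult.assoc)
  also have "\<dots> \<approx> (\<Sum>g \<in> extensions N b. \<Sum>h \<in> extensions N m. if cmp b g = cmp m h then S g * T h else 0)"
  proof (intro cong_sum)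
    fix g h assume g: "g \<in> extensions N b" and h: "h \<in> extensions N m"
    note g' = extensionsD[OF b db g] and h' = extensionsD[OF m dm h]
    have "S g * (T (cmp b g) * S (cmp m h)) * T h \<approx>
        S g * (if cmp b g = cmp m h then P (s (cmp b g)) else 0) * T h"
      using T_S[OF g'(4) h'(4)] g'(5) h'(5) by (intro cong_mult_right cong_mult_left) simp
    also have "\<dots> = (if cmp b g = cmp m h then S g * P (s g) * T h else 0)"
      by (simp only: g'(6) mult_if_zero_left mult_if_zero_right)
    also have "\<dots> \<approx> (if cmp b g = cmp m h then S g * T h else 0)"
      using S_P[OF g'(1)] by (intro cong_if_zero cong_mult_right)
    finally show "S g * (T (cmp b g) * S (cmp m h)) * T h \<approx>
        (if cmp b g = cmp m h then S g * T h else 0)" .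
  qed
  finally show ?thesis .
qed

lemma generator_product_expand:
  assumes a: "a \<in> Lam" and b: "b \<in> Lam" and m: "m \<in> Lam" and n: "n \<in> Lam"
    and ab: "s a = s b" and mn: "s m = s n" and db: "d b \<le> N" and dm: "d m \<le> N"
  shows "S a * T b * (S m * T n) \<approx>
    (\<Sum>g \<in> extensions N b. \<Sum>h \<in> extensions N m.
      if cmp b g = cmp m h then S (cmp a g) * T (cmp n h) else 0)"
proof -
  have "S a * T b * (S m * T n) = S a * (T b * S m) * T n" by (simp add: mult.assoc)
  also have "\<dots> \<approx> S a * (\<Sum>g \<in> extensions N b. \<Sum>h \<in> extensions N m.
      if cmp b g = cmp m h then S g * T h else 0) * T n"
    using T_S_expand[OF b m db dm] by (intro cong_mult_right cong_mult_left)
  also have "\<dots> = (\<Sum>g \<in> extensions N b. \<Sum>h \<in> extensions N m.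
      if cmp b g = cmp m h then (S a * S g) * (T h * T n) else 0)"
    unfolding sum_distrib_left sum_distrib_right mult_if_zero_left mult_if_zero_right
    by (intro sum.cong refl) (simp add: mult.assoc)
  also have "\<dots> \<approx> (\<Sum>g \<in> extensions N b. \<Sum>h \<in> extensions N m.
      if cmp b g = cmp m h then S (cmp a g) * T (cmp n h) else 0)"
  proof (intro cong_sum cong_if_zero cong_mult)
    fix g h assume g: "g \<in> extensions N b" and h: "h \<in> extensions N m"
    show "S a * S g \<approx> S (cmp a g)" using S_comp[OF a] extensionsD[OF b db g] ab by simp
    show "T h * T n \<approx> T (cmp n h)" using T_comp[OF n] extensionsD[OF m dm h] mn by simp
  qed
  finally show ?thesis .
qed

lemma cycline_extend:
  assumes ab: "cycline a b" and mn: "cycline m n" and db: "d b \<le> N" and dm: "d m \<le> N"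
    and g: "g \<in> extensions N b" and h: "h \<in> extensions N m" and e: "cmp b g = cmp m h"
  shows "cycline (cmp a g) (cmp n h)"
proof -
  have "cycline (cmp a g) (cmp b g)"
    using extensionsD[OF cyclineD(2)[OF ab] db g] cyclineD(3)[OF ab] by (intro cycline_comp[OF ab]) simp_all
  moreover have "cycline (cmp m h) (cmp n h)"
    using extensionsD[OF cyclineD(1)[OF mn] dm h] by (intro cycline_comp[OF mn]) simp_all
  ultimately show ?thesis using e cycline_trans by metis
qed

text \<open>Up to congruence this is \<open>proj b * proj m\<close>; indexing the projections by \<open>a g\<close> rather than
  \<open>b g\<close> is what lets it absorb the terms of the product expansion.\<close>

definition overlap :: "('k \<Rightarrow> nat) \<Rightarrow> 'p \<Rightarrow> 'p \<Rightarrow> 'p \<Rightarrow> 'b" where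
  "overlap N a b m =
    (\<Sum>g \<in> extensions N b. \<Sum>h \<in> extensions N m. if cmp b g = cmp m h then proj (cmp a g) else 0)"

lemma overlap_cong:
  assumes ab: "cycline a b" and db: "d b \<le> N"
  shows "overlap N a b m \<approx>
    (\<Sum>g \<in> extensions N b. \<Sum>h \<in> extensions N m. if cmp b g = cmp m h then proj (cmp b g) else 0)"
  unfolding overlap_def
proof (intro cong_sum cong_if_zero)
  fix g assume "g \<in> extensions N b"
  then show "proj (cmp a g) \<approx> proj (cmp b g)"
    using cyclineD[OF ab] extensionsD[OF cyclineD(2)[OF ab] db] by simp
qed

lemma overlap_proj_product:
  assumes ab: "cycline a b" and m: "m \<in> Lam" and db: "d b \<le> N" and dm: "d m \<le> N"
  shows "overlap N a b m \<approx> proj b * proj m"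
  using overlap_cong[OF ab db] cong_sym[OF proj_product_expand[OF cyclineD(2)[OF ab] m db dm]]
  by (rule cong_trans)

lemma overlap_swap:
  assumes ab: "cycline a b" and mn: "cycline m n"
    and da: "d a \<le> N" and db: "d b \<le> N" and dm: "d m \<le> N" and dn: "d n \<le> N"
  shows "overlap N a b m \<approx> overlap N m n a"
proof -
  have "overlap N a b m \<approx> proj b * proj m"
    by (rule overlap_proj_product[OF ab cyclineD(1)[OF mn] db dm])
  also have "\<dots> \<approx> proj a * proj n"
    by (rule cong_mult[OF cong_sym[OF cycline_proj[OF ab]] cycline_proj[OF mn]])
  also have "\<dots> \<approx> proj n * proj a"
    by (rule proj_commute[OF cyclineD(1)[OF ab] cyclineD(2)[OF mn]])
  also have "\<dots> \<approx> overlap N m n a"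
    by (rule cong_sym[OF overlap_proj_product[OF mn cyclineD(1)[OF ab] dn da]])
  finally show ?thesis .
qed

lemma proj_overlap_absorb:
  assumes ab: "cycline a b" and m: "m \<in> Lam" and db: "d b \<le> N" and dm: "d m \<le> N"
    and g: "g \<in> extensions N b" and h: "h \<in> extensions N m" and e: "cmp b g = cmp m h"
  shows "proj (cmp b g) * overlap N a b m \<approx> proj (cmp b g)"
proof -
  note b = cyclineD(2)[OF ab]
  note g' = extensionsD[OF b db g]
  have unique: "cmp b g2 = cmp m h2 \<and> cmp b g = cmp b g2 \<longleftrightarrow> h2 = h \<and> g2 = g"
    if g2: "g2 \<in> extensions N b" and h2: "h2 \<in> extensions N m" for g2 h2
  proof
    assume "cmp b g2 = cmp m h2 \<and> cmp b g = cmp b g2"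
    then have "g = g2" "cmp m h = cmp m h2" using extensions_left_cancel[OF b db g g2] e by simp_all
    then show "h2 = h \<and> g2 = g" using extensions_left_cancel[OF m dm h h2] by simp
  qed (use e in simp)
  have "proj (cmp b g) * overlap N a b m \<approx> proj (cmp b g) *
      (\<Sum>g2 \<in> extensions N b. \<Sum>h2 \<in> extensions N m.
        if cmp b g2 = cmp m h2 then proj (cmp b g2) else 0)"
    using overlap_cong[OF ab db] by (rule cong_mult_left)
  also have "\<dots> = (\<Sum>g2 \<in> extensions N b. \<Sum>h2 \<in> extensions N m.
      if cmp b g2 = cmp m h2 then proj (cmp b g) * proj (cmp b g2) else 0)"
    by (simp add: sum_distrib_left mult_if_zero_right)
  also have "\<dots> \<approx> (\<Sum>g2 \<in> extensions N b. \<Sum>h2 \<in> extensions N m.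
      if cmp b g2 = cmp m h2 then (if cmp b g = cmp b g2 then proj (cmp b g) else 0) else 0)"
  proof (intro cong_sum cong_if_zero)
    fix g2 assume g2: "g2 \<in> extensions N b"
    show "proj (cmp b g) * proj (cmp b g2) \<approx> (if cmp b g = cmp b g2 then proj (cmp b g) else 0)"
      using proj_orth[OF g'(4) extensionsD(4)[OF b db g2]] g'(5) extensionsD(5)[OF b db g2] by simp
  qed
  also have "\<dots> = (\<Sum>g2 \<in> extensions N b. \<Sum>h2 \<in> extensions N m.
      if h2 = h then (if g2 = g then proj (cmp b g) else 0) else 0)"
  proof (intro sum.cong refl)
    fix g2 h2 assume "g2 \<in> extensions N b" "h2 \<in> extensions N m"
    then show "(if cmp b g2 = cmp m h2 then (if cmp b g = cmp b g2 then proj (cmp b g) else 0) else 0)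
      = (if h2 = h then (if g2 = g then proj (cmp b g) else 0) else 0)"
      by (simp only: if_if_eq_conj unique)
  qed
  also have "\<dots> = proj (cmp b g)"
    using g h finite_extensions b m by (simp add: sum.delta)
  finally show ?thesis .
qed

lemma cycline_overlap_absorb:
  assumes ab: "cycline a b" and mn: "cycline m n" and db: "d b \<le> N" and dm: "d m \<le> N"
    and g: "g \<in> extensions N b" and h: "h \<in> extensions N m" and e: "cmp b g = cmp m h"
  shows "S (cmp a g) * T (cmp n h) * overlap N a b m \<approx> S (cmp a g) * T (cmp n h)"
proof -
  let ?x = "S (cmp a g) * T (cmp n h)"
  have agnh: "cycline (cmp a g) (cmp n h)" by (rule cycline_extend[OF ab mn db dm g h e])
  have ag_bg: "proj (cmp a g) \<approx> proj (cmp b g)"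
    using cyclineD[OF ab] extensionsD[OF cyclineD(2)[OF ab] db g] by simp
  have "?x * overlap N a b m \<approx> ?x * proj (cmp a g) * overlap N a b m"
    using cycline_absorb_proj[OF agnh] by (rule cong_sym[OF cong_mult_right])
  also have "\<dots> \<approx> ?x * (proj (cmp b g) * overlap N a b m)"
    unfolding mult.assoc using ag_bg by (intro cong_mult_left cong_mult_right)
  also have "\<dots> \<approx> ?x * proj (cmp b g)"
    using proj_overlap_absorb[OF ab cyclineD(1)[OF mn] db dm g h e] by (rule cong_mult_left)
  also have "\<dots> \<approx> ?x * proj (cmp a g)" using cong_sym[OF ag_bg] by (rule cong_mult_left)
  also have "\<dots> \<approx> ?x" by (rule cycline_absorb_proj[OF agnh])
  finally show ?thesis .
qed

lemma generator_product_overlap: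
  assumes ab: "cycline a b" and mn: "cycline m n" and db: "d b \<le> N" and dm: "d m \<le> N"
  shows "S a * T b * (S m * T n) \<approx>
    (\<Sum>g \<in> extensions N b. \<Sum>h \<in> extensions N m.
      if cmp b g = cmp m h then S (cmp a g) * T (cmp n h) * overlap N a b m else 0)"
proof -
  note ab' = cyclineD[OF ab] and mn' = cyclineD[OF mn]
  have "S a * T b * (S m * T n) \<approx>
      (\<Sum>g \<in> extensions N b. \<Sum>h \<in> extensions N m.
        if cmp b g = cmp m h then S (cmp a g) * T (cmp n h) else 0)"
    by (rule generator_product_expand[OF ab'(1,2) mn'(1,2) ab'(3) mn'(3) db dm])
  also have "\<dots> \<approx> (\<Sum>g \<in> extensions N b. \<Sum>h \<in> extensions N m.
      if cmp b g = cmp m h then S (cmp a g) * T (cmp n h) * overlap N a b m else 0)"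
    by (intro cong_sum cong_if_zero) (rule cong_sym, rule cycline_overlap_absorb[OF ab mn db dm])
  finally show ?thesis .
qed

lemma cycline_generators_commute:
  assumes ab: "cycline a b" and mn: "cycline m n"
  shows "S a * T b * (S m * T n) \<approx> S m * T n * (S a * T b)"
proof -
  note ab' = cyclineD[OF ab] and mn' = cyclineD[OF mn]
  define N where "N = deg_add (deg_add (d a) (d b)) (deg_add (d m) (d n))"
  have da: "d a \<le> N" and db: "d b \<le> N" and dm: "d m \<le> N" and dn: "d n \<le> N"
    unfolding N_def by (auto simp: le_fun_def deg_add_def)
  let ?c = "\<lambda>g h. cmp b g = cmp m h" and ?c' = "\<lambda>h' g'. cmp n h' = cmp a g'"
  let ?x = "\<lambda>g h. S (cmp a g) * T (cmp n h)" and ?y = "\<lambda>h' g'. S (cmp m h') * T (cmp b g')"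
  have "S a * T b * (S m * T n) \<approx>
      (\<Sum>g \<in> extensions N b. \<Sum>h \<in> extensions N m. if ?c g h then ?x g h * overlap N a b m else 0)"
    by (rule generator_product_overlap[OF ab mn db dm])
  also have "\<dots> \<approx>
      (\<Sum>g \<in> extensions N b. \<Sum>h \<in> extensions N m. if ?c g h then ?x g h * overlap N m n a else 0)"
    using overlap_swap[OF ab mn da db dm dn] by (intro cong_sum cong_if_zero cong_mult_left)
  also have "\<dots> = (\<Sum>g \<in> extensions N b. \<Sum>h \<in> extensions N m. \<Sum>h' \<in> extensions N n. \<Sum>g' \<in> extensions N a.
      if ?c g h then (if ?c' h' g' then ?x g h * proj (cmp m h') else 0) else 0)"
    unfolding overlap_def by (intro sum.cong refl) (simp add: sum_distrib_left mult_if_zero_right)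
  also have "\<dots> \<approx> (\<Sum>g \<in> extensions N b. \<Sum>h \<in> extensions N m. \<Sum>h' \<in> extensions N n. \<Sum>g' \<in> extensions N a.
      if ?c g h then (if ?c' h' g' then ?y h' g' * proj (cmp a g) else 0) else 0)"
  proof (intro cong_sum cong_if_zero)
    fix g h h' g'
    assume g: "g \<in> extensions N b" and h: "h \<in> extensions N m"
      and h': "h' \<in> extensions N n" and g': "g' \<in> extensions N a" and c: "?c g h" and c': "?c' h' g'"
    show "?x g h * proj (cmp m h') \<approx> ?y h' g' * proj (cmp a g)"
    proof (rule cycline_proj_exchange)
      show "cycline (cmp a g) (cmp n h)" by (rule cycline_extend[OF ab mn db dm g h c])
      show "cycline (cmp m h') (cmp b g')" by (rule cycline_extend[OF mn ab dn da h' g' c'])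
      show "deg_add (d (cmp a g)) (d (cmp b g')) = deg_add (d (cmp m h')) (d (cmp n h))"
        using deg_add_comp_extensions[OF ab'(1-3) da db g g'] deg_add_comp_extensions[OF mn'(1-3) dm dn h' h]
        by simp
    qed
  qed
  also have "\<dots> = (\<Sum>h' \<in> extensions N n. \<Sum>g' \<in> extensions N a. \<Sum>g \<in> extensions N b. \<Sum>h \<in> extensions N m.
      if ?c' h' g' then (if ?c g h then ?y h' g' * proj (cmp a g) else 0) else 0)"
    by (subst sum_swap_pairs) (intro sum.cong refl, simp)
  also have "\<dots> = (\<Sum>h' \<in> extensions N n. \<Sum>g' \<in> extensions N a. if ?c' h' g' then ?y h' g' * overlap N a b m else 0)"
    unfolding overlap_def by (intro sum.cong refl) (simp add: sum_distrib_left mult_if_zero_right)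
  also have "\<dots> \<approx> (\<Sum>h' \<in> extensions N n. \<Sum>g' \<in> extensions N a. if ?c' h' g' then ?y h' g' * overlap N m n a else 0)"
    using overlap_swap[OF ab mn da db dm dn] by (intro cong_sum cong_if_zero cong_mult_left)
  also have "\<dots> \<approx> S m * T n * (S a * T b)"
    by (rule cong_sym[OF generator_product_overlap[OF mn ab dn da]])
  finally show ?thesis .
qed

end

section \<open>The free algebra as polynomial mappings on words\<close>

text \<open>Words form a monoid under concatenation, so \<open>'a list \<Rightarrow>\<^sub>0 'r\<close> is a ring whose
  multiplication is the convolution \<open>fa_mult\<close>.\<close>

instantiation list :: (type) monoid_add
begin

definition zero_list_def: "0 = []"

definition plus_list_def: "(xs :: 'a list) + ys = xs @ ys"

instance by standard (auto simp: zero_list_def plus_list_def)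

end

lemma Sum_any_when_append:
  fixes g :: "'a list \<Rightarrow> 'b::comm_monoid_add"
  shows "(\<Sum>q. (g q when w = l + q)) = (g (drop (length l) w) when take (length l) w = l)"
proof -
  have "(\<lambda>q. (g q when w = l + q)) =
      (\<lambda>q. if q = drop (length l) w then (g q when take (length l) w = l) else 0)"
    by (auto simp: fun_eq_iff plus_list_def when_def) (metis append_take_drop_id)
  then show ?thesis by (simp only:) (rule Sum_any.delta)
qed

lemma lookup_times_list:
  fixes X Y :: "'a list \<Rightarrow>\<^sub>0 'b::comm_ring_1"
  shows "Poly_Mapping.lookup (X * Y) w = (\<Sum>i \<le> length w. Poly_Mapping.lookup X (take i w) * Poly_Mapping.lookup Y (drop i w))"
proof -
  have prefix_iff: "take (length l) w = l \<longleftrightarrow> l \<in> (\<lambda>i. take i w) ` {..length w}" for l :: "'a list"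
  proof
    assume l: "take (length l) w = l"
    then have "min (length w) (length l) = length l" by (metis length_take)
    then have "length l \<le> length w" by (simp add: min_def split: if_splits)
    then show "l \<in> (\<lambda>i. take i w) ` {..length w}" using l by (intro image_eqI[of _ _ "length l"]) auto
  qed auto
  have inj: "inj_on (\<lambda>i. take i w) {..length w}"
  proof (rule inj_onI)
    fix i j assume "i \<in> {..length w}" "j \<in> {..length w}" "take i w = take j w"
    then have "length (take i w) = length (take j w)" by simp
    then show "i = j" using \<open>i \<in> {..length w}\<close> \<open>j \<in> {..length w}\<close>
      by (simp add: min_def split: if_splits)
  qed
  have "Poly_Mapping.lookup (X * Y) w = (\<Sum>l. Poly_Mapping.lookup X l * (Poly_Mapping.lookup Y (drop (length l) w) when take (length l) w = l))"
    by (simp only: lookup_mult Sum_any_when_append)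
  also have "\<dots> = (\<Sum>l. if l \<in> (\<lambda>i. take i w) ` {..length w}
      then Poly_Mapping.lookup X l * Poly_Mapping.lookup Y (drop (length l) w) else 0)"
    by (rule Sum_any.cong) (simp add: prefix_iff when_def)
  also have "\<dots> = (\<Sum>l \<in> (\<lambda>i. take i w) ` {..length w}. Poly_Mapping.lookup X l * Poly_Mapping.lookup Y (drop (length l) w))"
    by (rule Sum_any.conditionalize[symmetric]) simp
  also have "\<dots> = (\<Sum>i \<le> length w. Poly_Mapping.lookup X (take i w) * Poly_Mapping.lookup Y (drop i w))"
    using inj by (simp add: sum.reindex)
  finally show ?thesis .
qed

lemma lookup_times: "Poly_Mapping.lookup (X * Y) = fa_mult (Poly_Mapping.lookup X) (Poly_Mapping.lookup (Y :: 'p kpgen list \<Rightarrow>\<^sub>0 'r::comm_ring_1))"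
  unfolding fa_mult_def by (rule ext) (rule lookup_times_list)

lemma lookup_minus_fa: "Poly_Mapping.lookup (X - Y) = fa_sub (Poly_Mapping.lookup X) (Poly_Mapping.lookup (Y :: 'p kpgen list \<Rightarrow>\<^sub>0 'r::comm_ring_1))"
  by (simp add: fun_eq_iff lookup_minus fa_sub_def)

lemma lookup_plus_fa: "Poly_Mapping.lookup (X + Y) = fa_add (Poly_Mapping.lookup X) (Poly_Mapping.lookup (Y :: 'p kpgen list \<Rightarrow>\<^sub>0 'r::comm_ring_1))"
  by (simp add: fun_eq_iff lookup_add fa_add_def)

lemma lookup_zero_fa: "Poly_Mapping.lookup (0 :: 'p kpgen list \<Rightarrow>\<^sub>0 'r::comm_ring_1) = fa_zero"
  by (simp add: fun_eq_iff fa_zero_def)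

lemma lookup_sum_fa: "Poly_Mapping.lookup (sum F A) = fa_sum A (\<lambda>a. Poly_Mapping.lookup (F a :: 'p kpgen list \<Rightarrow>\<^sub>0 'r::comm_ring_1))"
  by (simp add: fun_eq_iff lookup_sum fa_sum_def)

lemma lookup_if_zero_fa:
  "Poly_Mapping.lookup (if c then A else (0 :: 'p kpgen list \<Rightarrow>\<^sub>0 'r::comm_ring_1)) = (if c then Poly_Mapping.lookup A else fa_zero)"
  by (simp add: lookup_zero_fa)

lemma lookup_single_one: "Poly_Mapping.lookup (Poly_Mapping.single w (1::'r::comm_ring_1)) = fa_mono w"
  by (auto simp: fun_eq_iff lookup_single when_def fa_mono_def)

lemma lookup_scalar_times: "Poly_Mapping.lookup (Poly_Mapping.single [] c * X) w = c * Poly_Mapping.lookup (X :: 'a list \<Rightarrow>\<^sub>0 'b::comm_ring_1) w"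
proof -
  have "Poly_Mapping.lookup (Poly_Mapping.single [] c * X) w = (\<Sum>i \<le> length w. if i = 0 then c * Poly_Mapping.lookup X w else 0)"
    unfolding lookup_times_list lookup_single
    by (intro sum.cong refl) (auto simp: when_def)
  then show ?thesis by simp
qed

lemma lookup_times_scalar: "Poly_Mapping.lookup (X * Poly_Mapping.single [] c) w = Poly_Mapping.lookup (X :: 'a list \<Rightarrow>\<^sub>0 'b::comm_ring_1) w * c"
proof -
  have "Poly_Mapping.lookup (X * Poly_Mapping.single [] c) w = (\<Sum>i \<le> length w. if i = length w then Poly_Mapping.lookup X w * c else 0)"
    unfolding lookup_times_list lookup_single
    by (intro sum.cong refl) (auto simp: when_def)
  then show ?thesis by simp
qed

lemma scalar_commute: "Poly_Mapping.single [] c * X = X * Poly_Mapping.single [] (c::'b::comm_ring_1)"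
  by (rule poly_mapping_eqI) (simp add: lookup_scalar_times lookup_times_scalar mult.commute)

lemma sum_scalar_times_single:
  "X = (\<Sum>w \<in> Poly_Mapping.keys X. Poly_Mapping.single [] (Poly_Mapping.lookup X w) * Poly_Mapping.single w (1::'b::comm_ring_1))"
proof (rule poly_mapping_eqI)
  have "Poly_Mapping.single [] (Poly_Mapping.lookup X w) * Poly_Mapping.single w (1::'b) = Poly_Mapping.single w (Poly_Mapping.lookup X w)"
    for w
    by (simp add: mult_single plus_list_def)
  then show "Poly_Mapping.lookup X k = Poly_Mapping.lookup (\<Sum>w \<in> Poly_Mapping.keys X. Poly_Mapping.single [] (Poly_Mapping.lookup X w) * Poly_Mapping.single w 1) k"
    for k
    by (simp add: lookup_sum lookup_single when_def in_keys_iff)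
qed

lemma single_Nil_one: "Poly_Mapping.single [] 1 = (1 :: 'a list \<Rightarrow>\<^sub>0 'b::comm_ring_1)"
  using single_one[where 'a="'a list" and 'b='b] by (simp add: zero_list_def)

definition pm_ideal :: "('p, 'r::comm_ring_1) fa set \<Rightarrow> ('p kpgen list \<Rightarrow>\<^sub>0 'r) set" where
  "pm_ideal G = {Z. Poly_Mapping.lookup Z \<in> fa_ideal G}"

lemma pm_ideal_sum: "(\<And>i. i \<in> A \<Longrightarrow> f i \<in> pm_ideal G) \<Longrightarrow> sum f A \<in> pm_ideal G"
  by (induction A rule: infinite_finite_induct)
    (simp_all add: pm_ideal_def lookup_zero_fa lookup_plus_fa fa_ideal.zero fa_ideal.add)

lemma pm_ideal_scalar_times:
  "x \<in> pm_ideal G \<Longrightarrow> Poly_Mapping.single [] c * x \<in> pm_ideal G"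
proof -
  assume "x \<in> pm_ideal G"
  then have "fa_smult c (Poly_Mapping.lookup x) \<in> fa_ideal G" by (simp add: pm_ideal_def fa_ideal.smult)
  moreover have "Poly_Mapping.lookup (Poly_Mapping.single [] c * x) = fa_smult c (Poly_Mapping.lookup x)"
    by (simp add: fun_eq_iff lookup_scalar_times fa_smult_def)
  ultimately show ?thesis by (simp add: pm_ideal_def)
qed

lemma pm_ideal_single_times:
  "x \<in> pm_ideal G \<Longrightarrow> Poly_Mapping.single u 1 * (x * Poly_Mapping.single w 1) \<in> pm_ideal G"
  by (simp add: pm_ideal_def lookup_times lookup_single_one fa_ideal.mult)

lemma two_sided_ideal_pm_ideal: "two_sided_ideal (pm_ideal G)"
proof
  show "0 \<in> pm_ideal G" by (simp add: pm_ideal_def lookup_zero_fa fa_ideal.zero)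
  show "x + y \<in> pm_ideal G" if "x \<in> pm_ideal G" "y \<in> pm_ideal G" for x y
    using that by (simp add: pm_ideal_def lookup_plus_fa fa_ideal.add)
  show "a * x \<in> pm_ideal G" if x: "x \<in> pm_ideal G" for a x
  proof -
    have "a * x = (\<Sum>w \<in> Poly_Mapping.keys a. Poly_Mapping.single [] (Poly_Mapping.lookup a w) *
        (Poly_Mapping.single w 1 * (x * Poly_Mapping.single [] 1)))"
      by (subst sum_scalar_times_single[of a]) (simp add: sum_distrib_right mult.assoc single_Nil_one)
    then show ?thesis using x by (simp add: pm_ideal_sum pm_ideal_scalar_times pm_ideal_single_times)
  qed
  show "x * a \<in> pm_ideal G" if x: "x \<in> pm_ideal G" for a x
  proof -
    have "x * (Poly_Mapping.single [] c * Poly_Mapping.single w 1) =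
        Poly_Mapping.single [] c * (Poly_Mapping.single [] 1 * (x * Poly_Mapping.single w 1))"
      for c w
    proof -
      have "x * (Poly_Mapping.single [] c * Poly_Mapping.single w 1) =
          (x * Poly_Mapping.single [] c) * Poly_Mapping.single w 1"
        by (simp add: mult.assoc)
      also have "x * Poly_Mapping.single [] c = Poly_Mapping.single [] c * x"
        by (rule scalar_commute[symmetric])
      finally show ?thesis by (simp add: single_Nil_one mult.assoc)
    qed
    then have "x * a = (\<Sum>w \<in> Poly_Mapping.keys a. Poly_Mapping.single [] (Poly_Mapping.lookup a w) *
        (Poly_Mapping.single [] 1 * (x * Poly_Mapping.single w 1)))"
      by (subst sum_scalar_times_single[of a]) (simp add: sum_distrib_left)
    then show ?thesis using x by (simp add: pm_ideal_sum pm_ideal_scalar_times pm_ideal_single_times)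
  qed
qed

definition pm_p :: "'p \<Rightarrow> ('p kpgen list \<Rightarrow>\<^sub>0 'r::comm_ring_1)" where
  "pm_p v = Poly_Mapping.single [Pgen v] 1"

definition pm_s :: "('p \<Rightarrow> ('k \<Rightarrow> nat)) \<Rightarrow> 'p \<Rightarrow> ('p kpgen list \<Rightarrow>\<^sub>0 'r::comm_ring_1)" where
  "pm_s d l = Poly_Mapping.single (if d l = deg_zero then [Pgen l] else [Sgen l]) 1"

definition pm_sstar :: "('p \<Rightarrow> ('k \<Rightarrow> nat)) \<Rightarrow> 'p \<Rightarrow> ('p kpgen list \<Rightarrow>\<^sub>0 'r::comm_ring_1)" where
  "pm_sstar d l = Poly_Mapping.single (if d l = deg_zero then [Pgen l] else [Sstar l]) 1"

lemma lookup_pm_p: "Poly_Mapping.lookup (pm_p v :: 'p kpgen list \<Rightarrow>\<^sub>0 'r::comm_ring_1) = kp_p v"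
  unfolding pm_p_def kp_p_def by (rule lookup_single_one)

lemma lookup_pm_s: "Poly_Mapping.lookup (pm_s d l :: 'p kpgen list \<Rightarrow>\<^sub>0 'r::comm_ring_1) = kp_s d l"
  unfolding pm_s_def kp_s_def by (rule lookup_single_one)

lemma lookup_pm_sstar: "Poly_Mapping.lookup (pm_sstar d l :: 'p kpgen list \<Rightarrow>\<^sub>0 'r::comm_ring_1) = kp_sstar d l"
  unfolding pm_sstar_def kp_sstar_def by (rule lookup_single_one)

lemma kp_family_pm_ideal:
  assumes "is_kgraph Lam V r s cmp d" and "row_finite_no_sources Lam V r d"
  shows "kp_family Lam V r s cmp d
    (pm_ideal (kp_relations Lam V r s cmp d) :: ('p kpgen list \<Rightarrow>\<^sub>0 'r::comm_ring_1) set)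
    pm_p (pm_s d) (pm_sstar d)"
proof -
  let ?J = "pm_ideal (kp_relations Lam V r s cmp d) :: ('p kpgen list \<Rightarrow>\<^sub>0 'r) set"
  interpret two_sided_ideal ?J by (rule two_sided_ideal_pm_ideal)
  have relation: "cong X Y"
    if "fa_sub (Poly_Mapping.lookup X) (Poly_Mapping.lookup Y) \<in> kp_relations Lam V r s cmp d" for X Y
    using that unfolding cong_def unfolding pm_ideal_def by (simp add: lookup_minus_fa fa_ideal.gen)
  have fa_sub_zero: "fa_sub f fa_zero = f" for f :: "('p, 'r) fa"
    by (simp add: fa_sub_def fa_zero_def)
  note lookups = lookup_times lookup_pm_p lookup_pm_s lookup_pm_sstar lookup_sum_fa lookup_if_zero_fa
    lookup_zero_fa fa_sub_zero
  show ?thesis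
  proof (intro kp_family.intro kp_family_axioms.intro)
    show "kgraph Lam V r s cmp d" using assms by (rule kgraph.intro)
    show "two_sided_ideal ?J" by (rule two_sided_ideal_pm_ideal)
    show "pm_s d l = pm_p l" if "d l = deg_zero" for l using that by (simp add: pm_s_def pm_p_def)
    show "pm_sstar d l = pm_p l" if "d l = deg_zero" for l using that by (simp add: pm_sstar_def pm_p_def)
    show "cong (pm_p v) (\<Sum>l \<in> {l \<in> Lam. r l = v \<and> d l = n}. pm_s d l * pm_sstar d l)"
      if "v \<in> V" "n \<noteq> deg_zero" for v n
      using that by (intro relation) (unfold lookups kp_relations_def, rule UnI2, blast)
  qed (rule relation; unfold lookups; unfold kp_relations_def Un_iff mem_Collect_eq; blast)+
qed

definition pm_cycline_sub ::
  "'p set \<Rightarrow> 'p set \<Rightarrow> ('p \<Rightarrow> 'p) \<Rightarrow> ('p \<Rightarrow> 'p) \<Rightarrow> ('p \<Rightarrow> 'p \<Rightarrow> 'p)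
   \<Rightarrow> ('p \<Rightarrow> ('k \<Rightarrow> nat)) \<Rightarrow> ('p kpgen list \<Rightarrow>\<^sub>0 'r::comm_ring_1) set" where
  "pm_cycline_sub Lam V r s cmp d = subalgebra_gen (range (Poly_Mapping.single []))
    {pm_s d a * pm_sstar d b | a b. cycline_pair Lam V r s cmp d TYPE('r) a b}"

lemma cycline_sub_lookup:
  assumes "x \<in> cycline_sub Lam V r s cmp d"
  shows "\<exists>X \<in> pm_cycline_sub Lam V r s cmp d. x = Poly_Mapping.lookup (X :: 'p kpgen list \<Rightarrow>\<^sub>0 'r::comm_ring_1)"
  using assms
proof (induction rule: cycline_sub.induct)
  case (gen a b)
  then have "(pm_s d a * pm_sstar d b :: 'p kpgen list \<Rightarrow>\<^sub>0 'r) \<in> pm_cycline_sub Lam V r s cmp d"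
    unfolding pm_cycline_sub_def by (intro subalgebra_gen.gen) blast
  then show ?case by (intro bexI) (simp_all add: lookup_times lookup_pm_s lookup_pm_sstar)
next
  case zero
  have "0 \<in> pm_cycline_sub Lam V r s cmp d" unfolding pm_cycline_sub_def by (rule subalgebra_gen.zero)
  then show ?case by (intro bexI) (simp_all add: lookup_zero_fa)
next
  case (add x y)
  then obtain X Y where "X \<in> pm_cycline_sub Lam V r s cmp d" "Y \<in> pm_cycline_sub Lam V r s cmp d"
    and "x = Poly_Mapping.lookup X" "y = Poly_Mapping.lookup Y" by blast
  then show ?case
    unfolding pm_cycline_sub_def by (intro bexI[of _ "X + Y"] subalgebra_gen.add) (simp_all add: lookup_plus_fa)
next
  case (smult x c)
  then obtain X where "X \<in> pm_cycline_sub Lam V r s cmp d" and "x = Poly_Mapping.lookup X" by blast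
  then show ?case
    unfolding pm_cycline_sub_def
    by (intro bexI[of _ "Poly_Mapping.single [] c * X"] subalgebra_gen.scale rangeI)
      (simp_all add: fun_eq_iff lookup_scalar_times fa_smult_def)
next
  case (mult x y)
  then obtain X Y where "X \<in> pm_cycline_sub Lam V r s cmp d" "Y \<in> pm_cycline_sub Lam V r s cmp d"
    and "x = Poly_Mapping.lookup X" "y = Poly_Mapping.lookup Y" by blast
  then show ?case
    unfolding pm_cycline_sub_def by (intro bexI[of _ "X * Y"] subalgebra_gen.mult) (simp_all add: lookup_times)
qed

lemma pm_cycline_sub_commute:
  assumes "is_kgraph Lam V r s cmp d" and "row_finite_no_sources Lam V r d"
    and X: "X \<in> pm_cycline_sub Lam V r s cmp d" and Y: "Y \<in> pm_cycline_sub Lam V r s cmp d"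
  shows "X * Y - Y * X \<in> (pm_ideal (kp_relations Lam V r s cmp d) :: ('p kpgen list \<Rightarrow>\<^sub>0 'r::comm_ring_1) set)"
proof -
  interpret free: kp_family Lam V r s cmp d "pm_ideal (kp_relations Lam V r s cmp d) :: ('p kpgen list \<Rightarrow>\<^sub>0 'r) set"
    pm_p "pm_s d" "pm_sstar d"
    using assms(1,2) by (rule kp_family_pm_ideal)
  have cycline: "free.cycline a b" if "cycline_pair Lam V r s cmp d TYPE('r) a b" for a b
    using that unfolding cycline_pair_def free.cycline_def free.proj_def free.cong_def
    by (simp add: kp_eq_def kp_ideal_def pm_ideal_def lookup_minus_fa lookup_times lookup_pm_s lookup_pm_sstar)
  have "free.cong (X * Y) (Y * X)"
    using X Y unfolding pm_cycline_sub_def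
  proof (rule free.subalgebra_gen_commute[rotated 2])
    show "c * Z = Z * c" if "c \<in> range (Poly_Mapping.single [])" for c Z :: "'p kpgen list \<Rightarrow>\<^sub>0 'r"
    proof -
      from that obtain e where "c = Poly_Mapping.single [] e" by blast
      then show ?thesis by (simp only:) (rule scalar_commute)
    qed
    show "free.cong (G * H) (H * G)"
      if "G \<in> {pm_s d a * pm_sstar d b | a b. cycline_pair Lam V r s cmp d TYPE('r) a b}"
        and "H \<in> {pm_s d a * pm_sstar d b | a b. cycline_pair Lam V r s cmp d TYPE('r) a b}" for G H
      using that free.cycline_generators_commute cycline by blast
  qed
  then show ?thesis unfolding free.cong_def .
qed

theorem lemma4p4:
  fixes Lam V :: "'p set" and r s :: "'p \<Rightarrow> 'p" and cmp :: "'p \<Rightarrow> 'p \<Rightarrow> 'p"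
    and d :: "'p \<Rightarrow> ('k::finite \<Rightarrow> nat)"
  assumes "is_kgraph Lam V r s cmp d"
    and "row_finite_no_sources Lam V r d"
  shows "\<forall>x \<in> (cycline_sub Lam V r s cmp d :: ('p, 'r::comm_ring_1) fa set).
           \<forall>y \<in> cycline_sub Lam V r s cmp d.
             kp_eq Lam V r s cmp d (fa_mult x y) (fa_mult y x)"
proof (intro ballI)
  fix x y :: "('p, 'r) fa"
  assume "x \<in> cycline_sub Lam V r s cmp d" "y \<in> cycline_sub Lam V r s cmp d"
  then obtain X Y :: "'p kpgen list \<Rightarrow>\<^sub>0 'r"
    where "X \<in> pm_cycline_sub Lam V r s cmp d" "Y \<in> pm_cycline_sub Lam V r s cmp d"
      and xy: "x = Poly_Mapping.lookup X" "y = Poly_Mapping.lookup Y"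
    using cycline_sub_lookup by metis
  then have "X * Y - Y * X \<in> pm_ideal (kp_relations Lam V r s cmp d)"
    using assms by (intro pm_cycline_sub_commute)
  then show "kp_eq Lam V r s cmp d (fa_mult x y) (fa_mult y x)"
    unfolding xy kp_eq_def kp_ideal_def pm_ideal_def by (simp add: lookup_minus_fa lookup_times)
qed

end
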